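(* Let $\phi=\bigwedge_{j\in[q]}C_j$ be a CNF formula over variables $x_1,\dots,x_p$, let $a\ge1$ be an integer and let $\tau>a+4$. Construct the FT-TMB instance $(G,\{s\},\mathrm{tr},\mu)$ as follows. $G$ has vertices $s$; $v_{x_i},v_{\overline{x_i}},v_{x_i,in},v_{x_i,out}$ for each $i\in[p]$; and $v_{c_j}$ for each $j\in[q]$. Edges: $\{s,v_{x_i}\}$, $\{s,v_{\overline{x_i}}\}$, $\{v_{x_i,in},v_{x_i}\}$, $\{v_{x_i,in},v_{\overline{x_i}}\}$, $\{v_{x_i,in},v_{x_i,out}\}$ for all $i\in[p]$, and $\{v_{x_i,out},v_{c_j}\}$ whenever $C_j$ contains the literal $x_i$ or $\overline{x_i}$. Set $\mu(\{v_{x_i,in},v_{x_i,out}\})=1$ for all $i$, and $\mu$ arbitrary (in $[\tau]$) on all other edges. Traversal function: $\mathrm{tr}(\{s,v_{x_i}\},1)=\mathrm{tr}(\{s,v_{\overline{x_i}}\},a+1)=\mathrm{tr}(\{v_{x_i},v_{x_i,in}\},2)=\mathrm{tr}(\{v_{\overline{x_i}},v_{x_i,in}\},a+2)=\mathrm{tr}(\{v_{x_i,in},v_{x_i,out}\},3)=\mathrm{tr}(\{v_{x_i,in},v_{x_i,out}\},a+3)=1$; $\mathrm{tr}(\{v_{x_i,out},v_{c_j}\},4)=1$ if $x_i\in C_j$; $\mathrm{tr}(\{v_{x_i,out},v_{c_j}\},a+4)=1$ if $\overline{x_i}\in C_j$; and $\mathrm{tr}(e,t)=\tau$ for every other edge–time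 pair. Then there is a feasible labeling $\lambda$ with $\max_{v\ne s}\mathrm{FT}(s,v,(G,\lambda,\mathrm{tr}))=4$ if and only if $\phi$ is satisfiable.
   Context: A temporal graph is $(G,\lambda,\mathrm{tr})$ with time span $\tau$, $G=(V,E)$ a finite simple undirected graph, $\lambda:E\to2^{[\tau]}$ ($[\tau]=\{1,\dots,\tau\}$), $\mathrm{tr}:E\times[\tau]\to\mathbb N_0$. A temporal path from $u$ to $v$ is a sequence $(e_1,t_1),\dots,(e_k,t_k)$ such that $e_1,\dots,e_k$ form a path (distinct vertices) from $u$ to $v$ in $G$, $t_i\in\lambda(e_i)$, and $t_j+\mathrm{tr}(e_j,t_j)\le t_{j+1}$ for $j\in[k-1]$; its duration is $t_k+\mathrm{tr}(e_k,t_k)-t_1$. $\mathrm{FT}(u,v,\cdot)$ is the minimum duration of a temporal path from $u$ to $v$. A labeling $\lambda$ is feasible for the FT-TMB instance $(G,\{s\},\mathrm{tr},\mu)$ if $|\lambda(e)|\le\mu(e)$ for all edges $e$ and $s$ temporally reaches every other vertex in $(G,\lambda,\mathrm{tr})$. *)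

theory Defs
  imports Main "HOL-Library.Extended_Nat"
begin

definition temporal_path ::
  "'v set set \<Rightarrow> ('v set \<Rightarrow> nat set) \<Rightarrow> ('v set \<Rightarrow> nat \<Rightarrow> nat)
   \<Rightarrow> 'v \<Rightarrow> 'v \<Rightarrow> 'v list \<Rightarrow> nat list \<Rightarrow> bool" where
  "temporal_path E lam tr u v xs ts \<longleftrightarrow>
     ts \<noteq> [] \<and> length xs = Suc (length ts) \<and> distinct xs \<and>
     hd xs = u \<and> last xs = v \<and>
     (\<forall>i < length ts. {xs ! i, xs ! Suc i} \<in> E \<and> ts ! i \<in> lam {xs ! i, xs ! Suc i}) \<and>
     (\<forall>i. Suc i < length ts \<longrightarrow> ts ! i + tr {xs ! i, xs ! Suc i} (ts ! i) \<le> ts ! Suc i)"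

definition path_duration :: "('v set \<Rightarrow> nat \<Rightarrow> nat) \<Rightarrow> 'v list \<Rightarrow> nat list \<Rightarrow> nat" where
  "path_duration tr xs ts =
     last ts + tr {xs ! (length ts - 1), xs ! length ts} (last ts) - hd ts"

text \<open>Fastest travel time; infinity if there is no temporal path.\<close>
definition FT ::
  "'v set set \<Rightarrow> ('v set \<Rightarrow> nat set) \<Rightarrow> ('v set \<Rightarrow> nat \<Rightarrow> nat) \<Rightarrow> 'v \<Rightarrow> 'v \<Rightarrow> enat" where
  "FT E lam tr u v =
     (INF P \<in> {(xs, ts). temporal_path E lam tr u v xs ts}.
        enat (path_duration tr (fst P) (snd P)))"

definition temp_reaches ::
  "'v set set \<Rightarrow> ('v set \<Rightarrow> nat set) \<Rightarrow> ('v set \<Rightarrow> nat \<Rightarrow> nat) \<Rightarrow> 'v \<Rightarrow> 'v \<Rightarrow> bool" where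
  "temp_reaches E lam tr u v \<longleftrightarrow> (\<exists>xs ts. temporal_path E lam tr u v xs ts)"

definition feasible_labeling ::
  "'v set \<Rightarrow> 'v set set \<Rightarrow> 'v \<Rightarrow> ('v set \<Rightarrow> nat \<Rightarrow> nat) \<Rightarrow> ('v set \<Rightarrow> nat) \<Rightarrow> nat
   \<Rightarrow> ('v set \<Rightarrow> nat set) \<Rightarrow> bool" where
  "feasible_labeling V E s tr mu tau lam \<longleftrightarrow>
     (\<forall>e \<in> E. lam e \<subseteq> {1..tau} \<and> card (lam e) \<le> mu e) \<and>
     (\<forall>v \<in> V - {s}. temp_reaches E lam tr s v)"

text \<open>A literal is (i, True) for x_i and (i, False) for the negation of x_i.
  A CNF formula with clauses C_1..C_q is a function C from clause indices to
  sets of literals.\<close>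

definition cnf_satisfiable :: "nat \<Rightarrow> (nat \<Rightarrow> (nat \<times> bool) set) \<Rightarrow> bool" where
  "cnf_satisfiable q C \<longleftrightarrow>
     (\<exists>\<sigma> :: nat \<Rightarrow> bool. \<forall>j \<in> {1..q}. \<exists>(i, b) \<in> C j. \<sigma> i = b)"

datatype vtx = S | VX nat | VNX nat | VIn nat | VOut nat | VC nat

definition red_V :: "nat \<Rightarrow> nat \<Rightarrow> vtx set" where
  "red_V p q = {S} \<union> VX ` {1..p} \<union> VNX ` {1..p} \<union> VIn ` {1..p} \<union> VOut ` {1..p}
                \<union> VC ` {1..q}"

definition red_E :: "nat \<Rightarrow> nat \<Rightarrow> (nat \<Rightarrow> (nat \<times> bool) set) \<Rightarrow> vtx set set" where
  "red_E p q C =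
     {{S, VX i} | i. i \<in> {1..p}} \<union> {{S, VNX i} | i. i \<in> {1..p}} \<union>
     {{VIn i, VX i} | i. i \<in> {1..p}} \<union> {{VIn i, VNX i} | i. i \<in> {1..p}} \<union>
     {{VIn i, VOut i} | i. i \<in> {1..p}} \<union>
     {{VOut i, VC j} | i j. i \<in> {1..p} \<and> j \<in> {1..q} \<and>
                          ((i, True) \<in> C j \<or> (i, False) \<in> C j)}"

definition red_tr ::
  "nat \<Rightarrow> nat \<Rightarrow> (nat \<Rightarrow> (nat \<times> bool) set) \<Rightarrow> nat \<Rightarrow> nat \<Rightarrow> vtx set \<Rightarrow> nat \<Rightarrow> nat" where
  "red_tr p q C a tau e t =
     (if (\<exists>i \<in> {1..p}.
            (e = {S, VX i} \<and> t = 1) \<or> (e = {S, VNX i} \<and> t = a + 1) \<or>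
            (e = {VX i, VIn i} \<and> t = 2) \<or> (e = {VNX i, VIn i} \<and> t = a + 2) \<or>
            (e = {VIn i, VOut i} \<and> (t = 3 \<or> t = a + 3))) \<or>
         (\<exists>i \<in> {1..p}. \<exists>j \<in> {1..q}. e = {VOut i, VC j} \<and>
            (((i, True) \<in> C j \<and> t = 4) \<or> ((i, False) \<in> C j \<and> t = a + 4)))
      then 1 else tau)"

end

theory Submission
  imports Defs
begin

(* Vertices of the reduction graph sit in layers 0 to 4 (S, literal vertices, in, out, clause
   vertices) and every edge climbs at most one layer, so a clause vertex is at least four hops
   away from S. As all traversal times are at least 1, a temporal path to VC j of duration at
   most 4 has exactly four edges, never waits, and only uses traversals of time 1. Those exist
   only at times 1, 2, 3, 4 on the positive route of a variable and at a + 1, ..., a + 4 on the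
   negative one, so such a path crosses {VIn i, VOut i} at time 3 if it uses the literal x_i of
   C_j and at time a + 3 if it uses its negation. Since mu allows a single label on that edge,
   "x_i is true iff 3 is its label" satisfies every clause. Conversely, labelling the route of
   the true literal of each variable reaches every vertex within time 4. *)

section \<open>Temporal paths\<close>

lemma temporal_path_endpoints:
  assumes "temporal_path E lam tr u v xs ts"
  shows "xs ! 0 = u" "xs ! length ts = v"
proof -
  from assms have "xs \<noteq> []" "length xs = Suc (length ts)" "hd xs = u" "last xs = v"
    unfolding temporal_path_def by auto
  then show "xs ! 0 = u" "xs ! length ts = v" by (simp_all add: hd_conv_nth last_conv_nth)
qed

lemma temporal_path_single:
  "u \<noteq> v \<Longrightarrow> {u, v} \<in> E \<Longrightarrow> t \<in> lam {u, v} \<Longrightarrow> temporal_path E lam tr u v [u, v] [t]"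
  unfolding temporal_path_def by simp

lemma temporal_path_snoc:
  assumes tp: "temporal_path E lam tr u v xs ts"
    and w: "w \<notin> set xs" "{v, w} \<in> E" "t \<in> lam {v, w}"
    and wait: "last ts + tr {xs ! (length ts - 1), v} (last ts) \<le> t"
  shows "temporal_path E lam tr u w (xs @ [w]) (ts @ [t])"
proof -
  obtain l where l: "length ts = Suc l"
    using tp unfolding temporal_path_def by (cases ts) auto
  show ?thesis
    using tp w wait temporal_path_endpoints(2)[OF tp] l
    unfolding temporal_path_def by (auto simp: nth_append last_conv_nth less_Suc_eq hd_append)
qed

lemma temporal_path_time_gap:
  assumes tp: "temporal_path E lam tr u v xs ts" and tr_pos: "\<And>e t. 0 < tr e t"
  shows "m \<le> n \<Longrightarrow> n < length ts \<Longrightarrow> ts ! m + (n - m) \<le> ts ! n"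
proof (induction n)
  case 0
  then show ?case by simp
next
  case (Suc n)
  show ?case
  proof (cases "m = Suc n")
    case False
    with Suc have "ts ! m + (n - m) \<le> ts ! n" by simp
    moreover have "ts ! n + tr {xs ! n, xs ! Suc n} (ts ! n) \<le> ts ! Suc n"
      using tp Suc.prems unfolding temporal_path_def by blast
    moreover note tr_pos[of "{xs ! n, xs ! Suc n}" "ts ! n"]
    ultimately show ?thesis using False Suc.prems by linarith
  qed simp
qed

lemma length_le_path_duration:
  assumes tp: "temporal_path E lam tr u v xs ts" and tr_pos: "\<And>e t. 0 < tr e t"
  shows "length ts \<le> path_duration tr xs ts"
proof -
  have "ts \<noteq> []" using tp unfolding temporal_path_def by simp
  then have "hd ts + (length ts - 1) \<le> last ts"
    using temporal_path_time_gap[OF tp tr_pos, of 0 "length ts - 1"]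
    by (simp add: hd_conv_nth last_conv_nth)
  with tr_pos[of "{xs ! (length ts - 1), xs ! length ts}" "last ts"] \<open>ts \<noteq> []\<close> show ?thesis
    unfolding path_duration_def by linarith
qed

lemma tight_path_times:
  assumes tp: "temporal_path E lam tr u v xs ts" and tr_pos: "\<And>e t. 0 < tr e t"
    and tight: "path_duration tr xs ts \<le> length ts" and k: "k < length ts"
  shows "ts ! k = ts ! 0 + k" "tr {xs ! k, xs ! Suc k} (ts ! k) = 1"
proof -
  obtain l where l: "length ts = Suc l" using k by (cases ts) auto
  have "ts \<noteq> []" using l by auto
  with l have "hd ts = ts ! 0" "last ts = ts ! l" by (simp_all add: hd_conv_nth last_conv_nth)
  then have last: "ts ! l + tr {xs ! l, xs ! Suc l} (ts ! l) \<le> ts ! 0 + Suc l"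
    using tight temporal_path_time_gap[OF tp tr_pos, of 0 l] l
    unfolding path_duration_def by simp
  note last_pos = tr_pos[of "{xs ! l, xs ! Suc l}" "ts ! l"]
  have lower: "ts ! 0 + k \<le> ts ! k"
    using temporal_path_time_gap[OF tp tr_pos, of 0 k] k by simp
  have upper: "ts ! k + (l - k) \<le> ts ! l"
    using temporal_path_time_gap[OF tp tr_pos, of k l] k l by simp
  show time: "ts ! k = ts ! 0 + k"
    using last last_pos upper lower k l by linarith
  show "tr {xs ! k, xs ! Suc k} (ts ! k) = 1"
  proof (cases "k = l")
    case False
    then have "ts ! k + tr {xs ! k, xs ! Suc k} (ts ! k) \<le> ts ! Suc k"
      using tp k l unfolding temporal_path_def by simp
    moreover have "ts ! Suc k + (l - Suc k) \<le> ts ! l"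
      using temporal_path_time_gap[OF tp tr_pos, of "Suc k" l] False k l by simp
    ultimately show ?thesis
      using time last last_pos False k l tr_pos[of "{xs ! k, xs ! Suc k}" "ts ! k"] by linarith
  next
    case True
    then show ?thesis using last last_pos time by simp
  qed
qed

lemma FT_le_enat_iff:
  "FT E lam tr u v \<le> enat n \<longleftrightarrow>
     (\<exists>xs ts. temporal_path E lam tr u v xs ts \<and> path_duration tr xs ts \<le> n)"
proof -
  have "FT E lam tr u v \<le> enat n \<longleftrightarrow> FT E lam tr u v < enat (Suc n)"
    by (metis Suc_ile_eq not_le)
  also have "\<dots> \<longleftrightarrow> (\<exists>xs ts. temporal_path E lam tr u v xs ts \<and> path_duration tr xs ts < Suc n)"
    unfolding FT_def INF_less_iff by auto
  finally show ?thesis by (simp add: less_Suc_eq_le)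
qed

lemma FT_greatest:
  "(\<And>xs ts. temporal_path E lam tr u v xs ts \<Longrightarrow> d \<le> path_duration tr xs ts)
   \<Longrightarrow> enat d \<le> FT E lam tr u v"
  unfolding FT_def by (rule INF_greatest) auto

section \<open>The reduction graph\<close>

fun layer :: "vtx \<Rightarrow> nat" where
  "layer S = 0"
| "layer (VX i) = 1"
| "layer (VNX i) = 1"
| "layer (VIn i) = 2"
| "layer (VOut i) = 3"
| "layer (VC j) = 4"

lemma layer_red_E: "{x, y} \<in> red_E p q C \<Longrightarrow> layer y \<le> layer x + 1"
  unfolding red_E_def by (auto simp: doubleton_eq_iff)

lemma layer_temporal_path:
  assumes tp: "temporal_path (red_E p q C) lam tr u v xs ts"
  shows "m \<le> n \<Longrightarrow> n \<le> length ts \<Longrightarrow> layer (xs ! n) \<le> layer (xs ! m) + (n - m)"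
proof (induction n)
  case 0
  then show ?case by simp
next
  case (Suc n)
  show ?case
  proof (cases "m = Suc n")
    case False
    have "{xs ! n, xs ! Suc n} \<in> red_E p q C"
      using tp Suc.prems unfolding temporal_path_def by simp
    then show ?thesis using layer_red_E Suc False by fastforce
  qed simp
qed

lemma layer_le_path_length:
  assumes "temporal_path (red_E p q C) lam tr S v xs ts"
  shows "layer v \<le> length ts"
  using layer_temporal_path[OF assms, of 0 "length ts"] temporal_path_endpoints[OF assms] by simp

lemma red_E_fast_edges:
  assumes "i \<in> {1..p}"
  shows "{S, VX i} \<in> red_E p q C" "{S, VNX i} \<in> red_E p q C" "{VX i, VIn i} \<in> red_E p q C"
    "{VNX i, VIn i} \<in> red_E p q C" "{VIn i, VOut i} \<in> red_E p q C"
  using assms unfolding red_E_def by (auto simp: insert_commute)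

lemma red_E_clause_edge:
  assumes "i \<in> {1..p}" "j \<in> {1..q}" "(i, b) \<in> C j"
  shows "{VOut i, VC j} \<in> red_E p q C"
proof -
  have "(i, True) \<in> C j \<or> (i, False) \<in> C j" using assms(3) by (cases b) auto
  then show ?thesis using assms(1,2) unfolding red_E_def by (intro UnI2) blast
qed

lemma red_tr_pos: "0 < tau \<Longrightarrow> 0 < red_tr p q C a tau e t"
  unfolding red_tr_def by simp

lemma red_tr_fast_edges:
  assumes "i \<in> {1..p}"
  shows "red_tr p q C a tau {S, VX i} 1 = 1" "red_tr p q C a tau {S, VNX i} (a + 1) = 1"
    "red_tr p q C a tau {VX i, VIn i} 2 = 1" "red_tr p q C a tau {VNX i, VIn i} (a + 2) = 1"
    "red_tr p q C a tau {VIn i, VOut i} 3 = 1" "red_tr p q C a tau {VIn i, VOut i} (a + 3) = 1"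
  unfolding red_tr_def by (rule if_P, rule disjI1, rule bexI[OF _ assms], simp)+

lemma red_tr_fast_clause_edges:
  assumes "i \<in> {1..p}" "j \<in> {1..q}"
  shows "(i, True) \<in> C j \<Longrightarrow> red_tr p q C a tau {VOut i, VC j} 4 = 1"
    "(i, False) \<in> C j \<Longrightarrow> red_tr p q C a tau {VOut i, VC j} (a + 4) = 1"
  unfolding red_tr_def
  by (rule if_P, rule disjI2, rule bexI[OF _ assms(1)], rule bexI[OF _ assms(2)], simp)+

lemma red_tr_S_VX_eq_1:
  "red_tr p q C a tau {S, VX i} t = 1 \<Longrightarrow> tau \<noteq> 1 \<Longrightarrow> t = 1"
  by (cases "t = 1") (simp_all add: red_tr_def doubleton_eq_iff)

lemma red_tr_S_VNX_eq_1:
  "red_tr p q C a tau {S, VNX i} t = 1 \<Longrightarrow> tau \<noteq> 1 \<Longrightarrow> t = a + 1"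
  by (cases "t = a + 1") (simp_all add: red_tr_def doubleton_eq_iff)

lemma red_tr_VOut_VC_eq_1:
  "red_tr p q C a tau {VOut i, VC j} t = 1 \<Longrightarrow> tau \<noteq> 1 \<Longrightarrow>
    (i, True) \<in> C j \<and> t = 4 \<or> (i, False) \<in> C j \<and> t = a + 4"
  by (cases "(i, True) \<in> C j \<and> t = 4 \<or> (i, False) \<in> C j \<and> t = a + 4")
    (simp_all add: red_tr_def doubleton_eq_iff)

section \<open>Fast labelings give satisfying assignments\<close>

lemma fast_clause_path_tight:
  assumes tp: "temporal_path (red_E p q C) lam (red_tr p q C a tau) S (VC j) xs ts"
    and fast: "path_duration (red_tr p q C a tau) xs ts \<le> 4" and tau: "0 < tau"
  shows "length ts = 4"
    and "k \<le> 4 \<Longrightarrow> layer (xs ! k) = k"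
    and "k < 4 \<Longrightarrow> ts ! k = ts ! 0 + k"
    and "k < 4 \<Longrightarrow> red_tr p q C a tau {xs ! k, xs ! Suc k} (ts ! k) = 1"
proof -
  note tr_pos = red_tr_pos[OF tau]
  show len: "length ts = 4"
    using layer_le_path_length[OF tp] length_le_path_duration[OF tp tr_pos] fast by simp
  show "layer (xs ! k) = k" if "k \<le> 4"
    using layer_temporal_path[OF tp, of 0 k] layer_temporal_path[OF tp, of k 4] that len
      temporal_path_endpoints[OF tp] by simp
  show "ts ! k = ts ! 0 + k" "red_tr p q C a tau {xs ! k, xs ! Suc k} (ts ! k) = 1" if "k < 4"
    using tight_path_times[OF tp tr_pos, where k = k] fast len that by simp_all
qed

lemma fast_clause_path_literal:
  assumes tp: "temporal_path (red_E p q C) lam (red_tr p q C a tau) S (VC j) xs ts"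
    and fast: "path_duration (red_tr p q C a tau) xs ts \<le> 4"
    and a: "0 < a" and tau: "a + 4 < tau"
  shows "\<exists>i b. (i, b) \<in> C j \<and> (if b then 3 else a + 3) \<in> lam {VIn i, VOut i}"
proof -
  let ?tr = "red_tr p q C a tau"
  have "0 < tau" using tau by simp
  note len = fast_clause_path_tight(1)[OF tp fast this]
    and layer = fast_clause_path_tight(2)[OF tp fast this]
    and times = fast_clause_path_tight(3,4)[OF tp fast this]
  have edge: "{xs ! k, xs ! Suc k} \<in> red_E p q C" "ts ! k \<in> lam {xs ! k, xs ! Suc k}"
    if "k < 4" for k
    using tp len that unfolding temporal_path_def by simp_all
  \<comment> \<open>The layers force the shape S, x, VIn i, VOut i, VC j. The unit traversal out of S fixes
    the start time to 1 or a + 1 according to x, the one into VC j decides which literal is used.\<close>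
  obtain i where out: "xs ! 3 = VOut i" using layer[of 3] by (cases "xs ! 3") auto
  have "xs ! 2 = VIn i"
    using layer[of 2] edge(1)[of 2] out unfolding red_E_def
    by (cases "xs ! 2") (auto simp: doubleton_eq_iff numeral_eq_Suc)
  then have in_out: "ts ! 0 + 2 \<in> lam {VIn i, VOut i}"
    using edge(2)[of 2] times(1)[of 2] out by (simp add: numeral_eq_Suc)
  have "?tr {VOut i, VC j} (ts ! 0 + 3) = 1"
    using times[of 3] out temporal_path_endpoints(2)[OF tp] len by (simp add: numeral_eq_Suc)
  then have "(i, True) \<in> C j \<and> ts ! 0 + 3 = 4 \<or> (i, False) \<in> C j \<and> ts ! 0 + 3 = a + 4"
    by (rule red_tr_VOut_VC_eq_1) (use tau in simp)
  then have clause: "(i, True) \<in> C j \<and> ts ! 0 = 1 \<or> (i, False) \<in> C j \<and> ts ! 0 = a + 1"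
    by auto
  have first: "?tr {S, xs ! 1} (ts ! 0) = 1"
    using times(2)[of 0] temporal_path_endpoints(1)[OF tp] by simp
  show ?thesis
  proof (cases "xs ! 1")
    case (VX i')
    with first have "?tr {S, VX i'} (ts ! 0) = 1" by simp
    then have "ts ! 0 = 1" by (rule red_tr_S_VX_eq_1) (use tau in simp)
    then have "(i, True) \<in> C j" and "ts ! 0 + 2 = 3" using clause a by auto
    then show ?thesis using in_out by (intro exI[of _ i] exI[of _ True]) (simp only: if_True)
  next
    case (VNX i')
    with first have "?tr {S, VNX i'} (ts ! 0) = 1" by simp
    then have "ts ! 0 = a + 1" by (rule red_tr_S_VNX_eq_1) (use tau in simp)
    then have "(i, False) \<in> C j" and "ts ! 0 + 2 = a + 3" using clause a by auto
    then show ?thesis using in_out by (intro exI[of _ i] exI[of _ False]) (simp only: if_False)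
  qed (use layer[of 1] in simp_all)
qed

lemma FT_clause_ge_4:
  assumes "0 < tau"
  shows "4 \<le> FT (red_E p q C) lam (red_tr p q C a tau) S (VC j)"
proof -
  have "enat 4 \<le> FT (red_E p q C) lam (red_tr p q C a tau) S (VC j)"
  proof (rule FT_greatest)
    fix xs ts assume tp: "temporal_path (red_E p q C) lam (red_tr p q C a tau) S (VC j) xs ts"
    show "4 \<le> path_duration (red_tr p q C a tau) xs ts"
      using layer_le_path_length[OF tp] length_le_path_duration[OF tp red_tr_pos[OF assms]]
      by simp
  qed
  then show ?thesis by (simp add: numeral_eq_enat)
qed

lemma satisfiable_if_fast_feasible_labeling:
  assumes clauses: "\<forall>j \<in> {1..q}. fst ` C j \<subseteq> {1..p}"
    and a: "0 < a" and tau: "a + 4 < tau"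
    and mu_in_out: "\<forall>i \<in> {1..p}. mu {VIn i, VOut i} = 1"
    and feasible: "feasible_labeling (red_V p q) (red_E p q C) S (red_tr p q C a tau) mu tau lam"
    and fast: "\<forall>v \<in> red_V p q - {S}. FT (red_E p q C) lam (red_tr p q C a tau) S v \<le> 4"
  shows "cnf_satisfiable q C"
proof -
  \<comment> \<open>As mu = 1 on the in-out edge, its only label, 3 or a + 3, reads as a truth value.\<close>
  define \<sigma> where "\<sigma> i \<longleftrightarrow> 3 \<in> lam {VIn i, VOut i}" for i
  have "\<exists>(i, b) \<in> C j. \<sigma> i = b" if j: "j \<in> {1..q}" for j
  proof -
    have "VC j \<in> red_V p q - {S}" using j unfolding red_V_def by auto
    then have "FT (red_E p q C) lam (red_tr p q C a tau) S (VC j) \<le> enat 4"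
      using fast by (simp add: numeral_eq_enat)
    then obtain xs ts where "temporal_path (red_E p q C) lam (red_tr p q C a tau) S (VC j) xs ts"
      and "path_duration (red_tr p q C a tau) xs ts \<le> 4"
      unfolding FT_le_enat_iff by blast
    from fast_clause_path_literal[OF this a tau] obtain i b
      where ib: "(i, b) \<in> C j" and label: "(if b then 3 else a + 3) \<in> lam {VIn i, VOut i}"
      by blast
    have i: "i \<in> {1..p}" using clauses j ib by force
    then have "{VIn i, VOut i} \<in> red_E p q C" by (rule red_E_fast_edges)
    with feasible have "lam {VIn i, VOut i} \<subseteq> {1..tau}" "card (lam {VIn i, VOut i}) \<le> 1"
      using mu_in_out i unfolding feasible_labeling_def by auto
    then have single: "\<forall>x \<in> lam {VIn i, VOut i}. \<forall>y \<in> lam {VIn i, VOut i}. x = y"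
      using finite_subset[of _ "{1..tau}"] by (simp add: card_le_Suc0_iff_eq)
    have "\<sigma> i = b"
    proof (cases b)
      case False
      then have "a + 3 \<in> lam {VIn i, VOut i}" using label by simp
      then have "3 \<notin> lam {VIn i, VOut i}" using single a by fastforce
      then show ?thesis using False unfolding \<sigma>_def by simp
    qed (use label \<sigma>_def in simp)
    with ib show ?thesis by blast
  qed
  then show ?thesis unfolding cnf_satisfiable_def by blast
qed

section \<open>Satisfying assignments give fast labelings\<close>

definition assignment_labeling :: "nat \<Rightarrow> (nat \<Rightarrow> bool) \<Rightarrow> vtx set \<Rightarrow> nat set" where
  "assignment_labeling a \<sigma> e = {t. \<exists>i.
      e = {S, VX i} \<and> t = 1 \<or> e = {S, VNX i} \<and> t = a + 1 \<or>
      e = {VX i, VIn i} \<and> t = 2 \<or> e = {VNX i, VIn i} \<and> t = a + 2 \<or>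
      e = {VIn i, VOut i} \<and> t = (if \<sigma> i then 3 else a + 3) \<or>
      (\<exists>j. e = {VOut i, VC j} \<and> t = (if \<sigma> i then 4 else a + 4))}"

lemma assignment_labeling_simps:
  "assignment_labeling a \<sigma> {S, VX i} = {1}"
  "assignment_labeling a \<sigma> {S, VNX i} = {a + 1}"
  "assignment_labeling a \<sigma> {VX i, VIn i} = {2}"
  "assignment_labeling a \<sigma> {VNX i, VIn i} = {a + 2}"
  "assignment_labeling a \<sigma> {VIn i, VOut i} = {if \<sigma> i then 3 else a + 3}"
  "assignment_labeling a \<sigma> {VOut i, VC j} = {if \<sigma> i then 4 else a + 4}"
  unfolding assignment_labeling_def by (auto simp: doubleton_eq_iff)

lemma assignment_labeling_singleton:
  assumes "t \<in> assignment_labeling a \<sigma> e"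
  shows "assignment_labeling a \<sigma> e = {t}"
proof -
  from assms obtain i where
    "e = {S, VX i} \<and> t = 1 \<or> e = {S, VNX i} \<and> t = a + 1 \<or>
     e = {VX i, VIn i} \<and> t = 2 \<or> e = {VNX i, VIn i} \<and> t = a + 2 \<or>
     e = {VIn i, VOut i} \<and> t = (if \<sigma> i then 3 else a + 3) \<or>
     (\<exists>j. e = {VOut i, VC j} \<and> t = (if \<sigma> i then 4 else a + 4))"
    unfolding assignment_labeling_def by blast
  then show ?thesis by (elim disjE exE conjE) (simp_all add: assignment_labeling_simps)
qed

lemma card_assignment_labeling: "card (assignment_labeling a \<sigma> e) \<le> 1"
  using assignment_labeling_singleton
  by (cases "assignment_labeling a \<sigma> e = {}") fastforce+

lemma assignment_labeling_subset: "assignment_labeling a \<sigma> e \<subseteq> {1..a + 4}"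
proof
  fix t assume "t \<in> assignment_labeling a \<sigma> e"
  then obtain i
    where "t \<in> {1, a + 1, 2, a + 2, if \<sigma> i then 3 else a + 3, if \<sigma> i then 4 else a + 4}"
    unfolding assignment_labeling_def by blast
  then show "t \<in> {1..a + 4}" by auto
qed

lemma literal_route:
  fixes p q a tau :: nat and C :: "nat \<Rightarrow> (nat \<times> bool) set"
  assumes i: "i \<in> {1..p}"
    and side: "b \<and> x = VX i \<and> [t1, t2, t3, t4] = [1, 2, 3, 4] \<or>
      \<not> b \<and> x = VNX i \<and> [t1, t2, t3, t4] = [a + 1, a + 2, a + 3, a + 4]"
    and labels: "t1 \<in> lam {S, x}" "t2 \<in> lam {x, VIn i}" "t3 \<in> lam {VIn i, VOut i}"
  defines "E \<equiv> red_E p q C" and "T \<equiv> red_tr p q C a tau"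
  shows "temporal_path E lam T S (VIn i) [S, x, VIn i] [t1, t2]"
    and "temporal_path E lam T S (VOut i) [S, x, VIn i, VOut i] [t1, t2, t3]"
    and "j \<in> {1..q} \<Longrightarrow> (i, b) \<in> C j \<Longrightarrow> t4 \<in> lam {VOut i, VC j} \<Longrightarrow>
      temporal_path E lam T S (VC j) [S, x, VIn i, VOut i, VC j] [t1, t2, t3, t4]"
    and "path_duration T [S, x, VIn i] [t1, t2] = 2"
    and "path_duration T [S, x, VIn i, VOut i] [t1, t2, t3] = 3"
    and "j \<in> {1..q} \<Longrightarrow> (i, b) \<in> C j \<Longrightarrow>
      path_duration T [S, x, VIn i, VOut i, VC j] [t1, t2, t3, t4] = 4"
proof -
  have x: "x \<noteq> S" "x \<noteq> VIn i" "x \<noteq> VOut i" "{S, x} \<in> E" "{x, VIn i} \<in> E"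
    and fast: "T {S, x} t1 = 1" "T {x, VIn i} t2 = 1" "T {VIn i, VOut i} t3 = 1"
    and times: "t2 = t1 + 1" "t3 = t1 + 2" "t4 = t1 + 3"
    using side red_E_fast_edges[OF i] red_tr_fast_edges[OF i] unfolding E_def T_def by auto
  have x_VC: "VC j \<noteq> x" for j using side by auto
  have clause_fast: "T {VOut i, VC j} t4 = 1" if "j \<in> {1..q}" "(i, b) \<in> C j" for j
    using side red_tr_fast_clause_edges[OF i that(1)] that(2) unfolding T_def by auto
  have "temporal_path E lam T S x [S, x] [t1]"
    using x labels by (intro temporal_path_single) auto
  then show to_in: "temporal_path E lam T S (VIn i) [S, x, VIn i] [t1, t2]"
    using temporal_path_snoc[of E lam T S x "[S, x]" "[t1]" "VIn i" t2] x labels fast times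
    by simp
  then show to_out: "temporal_path E lam T S (VOut i) [S, x, VIn i, VOut i] [t1, t2, t3]"
    using temporal_path_snoc[of E lam T S "VIn i" "[S, x, VIn i]" "[t1, t2]" "VOut i" t3]
      x labels fast times red_E_fast_edges[OF i] unfolding E_def
    by simp
  show "temporal_path E lam T S (VC j) [S, x, VIn i, VOut i, VC j] [t1, t2, t3, t4]"
    if "j \<in> {1..q}" "(i, b) \<in> C j" "t4 \<in> lam {VOut i, VC j}"
    using temporal_path_snoc[OF to_out, of "VC j" t4] x x_VC fast times that
      red_E_clause_edge[of i p j q b C, OF i that(1,2)] unfolding E_def
    by simp
  show "path_duration T [S, x, VIn i] [t1, t2] = 2"
    and "path_duration T [S, x, VIn i, VOut i] [t1, t2, t3] = 3"
    using fast times by (simp_all add: path_duration_def)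
  show "path_duration T [S, x, VIn i, VOut i, VC j] [t1, t2, t3, t4] = 4"
    if "j \<in> {1..q}" "(i, b) \<in> C j"
    using clause_fast[OF that] times by (simp add: path_duration_def)
qed

lemma assignment_labeling_fast_paths:
  assumes clauses: "\<forall>j \<in> {1..q}. fst ` C j \<subseteq> {1..p}"
    and sat: "\<forall>j \<in> {1..q}. \<exists>(i, b) \<in> C j. \<sigma> i = b"
    and v: "v \<in> red_V p q - {S}"
  shows "\<exists>xs ts.
    temporal_path (red_E p q C) (assignment_labeling a \<sigma>) (red_tr p q C a tau) S v xs ts \<and>
    path_duration (red_tr p q C a tau) xs ts \<le> 4"
proof -
  let ?E = "red_E p q C" and ?L = "assignment_labeling a \<sigma>" and ?T = "red_tr p q C a tau"
  define x where "x i = (if \<sigma> i then VX i else VNX i)" for i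
  define t where "t i k = (if \<sigma> i then k else a + k)" for i k :: nat
  have side: "\<sigma> i \<and> x i = VX i \<and> [t i 1, t i 2, t i 3, t i 4] = [1, 2, 3, 4] \<or>
      \<not> \<sigma> i \<and> x i = VNX i \<and> [t i 1, t i 2, t i 3, t i 4] = [a + 1, a + 2, a + 3, a + 4]" for i
    by (simp add: x_def t_def)
  have labels: "t i 1 \<in> ?L {S, x i}" "t i 2 \<in> ?L {x i, VIn i}" "t i 3 \<in> ?L {VIn i, VOut i}"
      "t i 4 \<in> ?L {VOut i, VC j}" for i j
    by (simp_all add: x_def t_def assignment_labeling_simps)
  note route = literal_route[where q = q and C = C and tau = tau, OF _ side labels(1-3)]
  from v consider (VX) i where "i \<in> {1..p}" "v = VX i" | (VNX) i where "i \<in> {1..p}" "v = VNX i"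
    | (VIn) i where "i \<in> {1..p}" "v = VIn i" | (VOut) i where "i \<in> {1..p}" "v = VOut i"
    | (VC) j where "j \<in> {1..q}" "v = VC j"
    unfolding red_V_def by blast
  then show ?thesis
  proof cases
    case (VX i)
    have "temporal_path ?E ?L ?T S (VX i) [S, VX i] [1]"
      by (rule temporal_path_single)
        (simp_all add: red_E_fast_edges[OF VX(1)] assignment_labeling_simps)
    moreover have "path_duration ?T [S, VX i] [1] \<le> 4"
      using red_tr_fast_edges[OF VX(1)] by (simp add: path_duration_def)
    ultimately show ?thesis using VX(2) by blast
  next
    case (VNX i)
    have "temporal_path ?E ?L ?T S (VNX i) [S, VNX i] [a + 1]"
      by (rule temporal_path_single)
        (simp_all add: red_E_fast_edges[OF VNX(1)] assignment_labeling_simps)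
    moreover have "path_duration ?T [S, VNX i] [a + 1] \<le> 4"
      using red_tr_fast_edges[OF VNX(1)] by (simp add: path_duration_def)
    ultimately show ?thesis using VNX(2) by blast
  next
    case (VIn i)
    have "path_duration ?T [S, x i, VIn i] [t i 1, t i 2] \<le> 4"
      using route(4)[OF VIn(1)] by linarith
    then show ?thesis using route(1)[OF VIn(1)] VIn(2) by blast
  next
    case (VOut i)
    have "path_duration ?T [S, x i, VIn i, VOut i] [t i 1, t i 2, t i 3] \<le> 4"
      using route(5)[OF VOut(1)] by linarith
    then show ?thesis using route(2)[OF VOut(1)] VOut(2) by blast
  next
    case (VC j)
    obtain i where lit: "(i, \<sigma> i) \<in> C j" using sat VC(1) by fastforce
    have i: "i \<in> {1..p}" using lit clauses VC(1) by force
    have "path_duration ?T [S, x i, VIn i, VOut i, VC j] [t i 1, t i 2, t i 3, t i 4] \<le> 4"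
      using route(6)[OF i VC(1) lit] by linarith
    then show ?thesis using route(3)[OF i VC(1) lit labels(4)] VC(2) by blast
  qed
qed

lemma fast_feasible_labeling_if_satisfiable:
  assumes clauses: "\<forall>j \<in> {1..q}. fst ` C j \<subseteq> {1..p}"
    and tau: "a + 4 < tau"
    and mu_range: "\<forall>e \<in> red_E p q C. mu e \<in> {1..tau}"
    and sat: "cnf_satisfiable q C"
  shows "\<exists>lam. feasible_labeling (red_V p q) (red_E p q C) S (red_tr p q C a tau) mu tau lam \<and>
    (\<forall>v \<in> red_V p q - {S}. FT (red_E p q C) lam (red_tr p q C a tau) S v \<le> 4)"
proof -
  from sat obtain \<sigma> where \<sigma>: "\<forall>j \<in> {1..q}. \<exists>(i, b) \<in> C j. \<sigma> i = b"
    unfolding cnf_satisfiable_def by blast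
  let ?L = "assignment_labeling a \<sigma>"
  note paths = assignment_labeling_fast_paths[OF clauses \<sigma>, of _ a tau]
  have "feasible_labeling (red_V p q) (red_E p q C) S (red_tr p q C a tau) mu tau ?L"
    unfolding feasible_labeling_def temp_reaches_def
  proof (intro conjI ballI)
    fix e assume "e \<in> red_E p q C"
    then show "?L e \<subseteq> {1..tau}" "card (?L e) \<le> mu e"
      using assignment_labeling_subset[of a \<sigma> e] card_assignment_labeling[of a \<sigma> e] mu_range tau
      by fastforce+
  qed (use paths in blast)
  moreover have "\<forall>v \<in> red_V p q - {S}. FT (red_E p q C) ?L (red_tr p q C a tau) S v \<le> 4"
    unfolding numeral_eq_enat FT_le_enat_iff using paths by blast
  ultimately show ?thesis by blast
qed

lemma Max_image_eq_iff:
  fixes f :: "'a \<Rightarrow> 'b :: linorder"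
  assumes "finite A" "x \<in> A" "m \<le> f x"
  shows "Max (f ` A) = m \<longleftrightarrow> (\<forall>y \<in> A. f y \<le> m)"
proof
  assume "Max (f ` A) = m"
  then show "\<forall>y \<in> A. f y \<le> m" using assms(1) by auto
next
  assume bound: "\<forall>y \<in> A. f y \<le> m"
  then have "f x = m" using assms(2,3) by (auto intro: antisym)
  then show "Max (f ` A) = m" using assms(1,2) bound by (intro Max_eqI) auto
qed

lemma Max_FT_eq_4_iff:
  assumes q: "1 \<le> q" and tau: "0 < tau"
  shows "Max {FT (red_E p q C) lam (red_tr p q C a tau) S v | v. v \<in> red_V p q - {S}} = 4 \<longleftrightarrow>
    (\<forall>v \<in> red_V p q - {S}. FT (red_E p q C) lam (red_tr p q C a tau) S v \<le> 4)"
proof -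
  let ?V = "red_V p q - {S}" and ?FT = "\<lambda>v. FT (red_E p q C) lam (red_tr p q C a tau) S v"
  have "VC 1 \<in> ?V" using q unfolding red_V_def by auto
  moreover have "finite ?V" unfolding red_V_def by simp
  moreover have "{?FT v | v. v \<in> ?V} = ?FT ` ?V" by blast
  ultimately show ?thesis using Max_image_eq_iff[of ?V "VC 1" 4 ?FT] FT_clause_ge_4[OF tau] by simp
qed

theorem lemma2:
  fixes p q a tau :: nat and C :: "nat \<Rightarrow> (nat \<times> bool) set" and mu :: "vtx set \<Rightarrow> nat"
  assumes q_pos: "q \<ge> 1"
    and clauses: "\<forall>j \<in> {1..q}. fst ` C j \<subseteq> {1..p}"
    and a_pos: "a \<ge> 1"
    and tau: "tau > a + 4"
    and mu_in_out: "\<forall>i \<in> {1..p}. mu {VIn i, VOut i} = 1"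
    and mu_range: "\<forall>e \<in> red_E p q C. mu e \<in> {1..tau}"
  shows "(\<exists>lam. feasible_labeling (red_V p q) (red_E p q C) S (red_tr p q C a tau) mu tau lam \<and>
            Max {FT (red_E p q C) lam (red_tr p q C a tau) S v | v. v \<in> red_V p q - {S}} = 4)
         \<longleftrightarrow> cnf_satisfiable q C"
proof -
  have "0 < tau" using tau by simp
  show ?thesis
    unfolding Max_FT_eq_4_iff[OF q_pos \<open>0 < tau\<close>]
    using satisfiable_if_fast_feasible_labeling[OF clauses _ tau mu_in_out] a_pos
      fast_feasible_labeling_if_satisfiable[OF clauses tau mu_range]
    by auto
qed

end
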